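(* In the setting described in the context, assume $x_h^2\beta>3$ and $n>\frac1{2\alpha x_h^2\beta}-\frac1{x_h^2\beta}$. Then there exists $\dot k>0$ such that for all $0<k\le\dot k$: $$(\hat\sigma^1_{(k+1)n})^2\le2(\hat\lambda\lambda^{n-1})^2\frac1\alpha(\hat\lambda\lambda^{n-1})^{2k},\qquad (\hat\sigma^{r}_{(k+1)n})^2\le6(\hat\lambda\lambda^{n-r})^2\frac1\alpha(\hat\lambda\lambda^{n-1})^{2k}\ \text{ for every } r\in\{2,\dots,n\}.$$
   Context: Fix $\alpha,\beta,x_h,c>0$ and an integer $n\ge2$. Model: $y=\theta x+\xi$, $\xi\sim\mathcal N(0,\beta^{-1})$, prior $\theta\sim\mathcal N(0,\alpha^{-1})$. Database $D_2$ consists of $n-1$ copies of $(x_h,cx_h)$ and one copy of $(x_h/2,cx_h/2)$. Cyclic SGLD with batch size 1 and step size $\eta=\frac2{(\alpha+nx_h^2\beta)^2}$: $\theta_0\sim\mathcal N(0,\alpha^{-1})$, $\theta_{j+1}=\theta_j+\frac\eta2[-\alpha\theta_j+n\beta(y_{i_j}-\theta_jx_{i_j})x_{i_j}]+\sqrt\eta\,\xi_j$ with $\xi_j\sim\mathcal N(0,1)$ i.i.d. independent of $\theta_0$; the database is shuffled once uniformly and its samples are then used cyclically. Let $r\in\{1,\dots,n\}$ be the position within each epoch at which $(x_h/2,cx_h/2)$ is used; conditionally on $r$ the $j$-th iterate is $\hat\theta^r_j\sim\mathcal N(\hat\mu^r_j,(\hat\sigma^r_j)^2)$. Set $\lambda=1-\frac\eta2(\alpha+nx_h^2\beta)$,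 $\hat\lambda=1-\frac\eta2(\alpha+n\frac{x_h^2}4\beta)$. *)

theory Defs
  imports "HOL-Probability.Probability"
begin

definition sgld_eta :: "real \<Rightarrow> real \<Rightarrow> real \<Rightarrow> nat \<Rightarrow> real" where
  "sgld_eta \<alpha> \<beta> xh n = 2 / (\<alpha> + real n * xh\<^sup>2 * \<beta>)\<^sup>2"

definition sgld_lambda :: "real \<Rightarrow> real \<Rightarrow> real \<Rightarrow> nat \<Rightarrow> real" where
  "sgld_lambda \<alpha> \<beta> xh n = 1 - sgld_eta \<alpha> \<beta> xh n / 2 * (\<alpha> + real n * xh\<^sup>2 * \<beta>)"

definition sgld_lambda_hat :: "real \<Rightarrow> real \<Rightarrow> real \<Rightarrow> nat \<Rightarrow> real" where
  "sgld_lambda_hat \<alpha> \<beta> xh n = 1 - sgld_eta \<alpha> \<beta> xh n / 2 * (\<alpha> + real n * (xh\<^sup>2 / 4) * \<beta>)"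

text \<open>Data point used at iteration j (0-based) when the special sample
  (xh/2, c xh/2) sits at position r (1-based) in each epoch; all other
  positions carry the sample (xh, c xh).\<close>

definition sgld_x :: "real \<Rightarrow> nat \<Rightarrow> nat \<Rightarrow> nat \<Rightarrow> real" where
  "sgld_x xh n r j = (if j mod n = r - 1 then xh / 2 else xh)"

definition sgld_y :: "real \<Rightarrow> real \<Rightarrow> nat \<Rightarrow> nat \<Rightarrow> nat \<Rightarrow> real" where
  "sgld_y xh c n r j = c * sgld_x xh n r j"

fun sgld_iter :: "real \<Rightarrow> real \<Rightarrow> real \<Rightarrow> real \<Rightarrow> nat \<Rightarrow> nat \<Rightarrow>
    ('a \<Rightarrow> real) \<Rightarrow> (nat \<Rightarrow> 'a \<Rightarrow> real) \<Rightarrow> nat \<Rightarrow> 'a \<Rightarrow> real" where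
  "sgld_iter \<alpha> \<beta> xh c n r th0 xi 0 = th0"
| "sgld_iter \<alpha> \<beta> xh c n r th0 xi (Suc j) = (\<lambda>\<omega>.
     sgld_iter \<alpha> \<beta> xh c n r th0 xi j \<omega>
     + sgld_eta \<alpha> \<beta> xh n / 2 *
        (- \<alpha> * sgld_iter \<alpha> \<beta> xh c n r th0 xi j \<omega>
         + real n * \<beta> * (sgld_y xh c n r j - sgld_iter \<alpha> \<beta> xh c n r th0 xi j \<omega> * sgld_x xh n r j)
             * sgld_x xh n r j)
     + sqrt (sgld_eta \<alpha> \<beta> xh n) * xi j \<omega>)"

end

theory Submission
  imports Defs
begin

(* The iterates obey the affine recursion theta_(j+1) = m_j theta_j + d_j + sqrt eta xi_j with
   m_j in {lambda, lambda_hat}, so theta_j is an affine combination of the independent centred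
   Gaussians theta_0, xi_0, ..., xi_(j-1).  Its variance is (prod m_i)^2 / alpha plus eta times a
   sum of j squared partial products of the m_i, each at most 1.  Over two epochs the product is
   P^2 with P = lambda_hat lambda^(n-1), so the variance at time 2n is at most P^4/alpha + 2 n eta.
   A third-order Bonferroni bound for lambda^(4n) = (1 - 1/A)^(4n), where
   A = alpha + n xh^2 beta >= alpha + 3n, gives 2 n eta <= P^4/alpha.  This yields both bounds
   for k = 1, so kd = 1 works. *)

lemma (in prob_space) variance_affine_indep_centred:
  fixes X :: "'i \<Rightarrow> 'a \<Rightarrow> real"
  assumes fin: "finite I" and indep: "indep_vars (\<lambda>_. borel) X I"
    and square_int: "\<And>i. i \<in> I \<Longrightarrow> integrable M (\<lambda>\<omega>. (X i \<omega>)\<^sup>2)"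
    and centred: "\<And>i. i \<in> I \<Longrightarrow> expectation (X i) = 0"
  shows "variance (\<lambda>\<omega>. b + (\<Sum>i\<in>I. w i * X i \<omega>))
       = (\<Sum>i\<in>I. (w i)\<^sup>2 * expectation (\<lambda>\<omega>. (X i \<omega>)\<^sup>2))"
proof -
  have int: "integrable M (X i)" if "i \<in> I" for i
  proof -
    have "random_variable borel (X i)" using indep that unfolding indep_vars_def2 by blast
    then show ?thesis by (rule square_integrable_imp_integrable[OF _ square_int[OF that]])
  qed
  have prod_int: "integrable M (\<lambda>\<omega>. X i \<omega> * X j \<omega>)" if "i \<in> I" "j \<in> I" for i j
  proof (cases "i = j")
    case True
    then show ?thesis using square_int[OF \<open>i \<in> I\<close>] by (simp add: power2_eq_square)
  next
    case False
    have "indep_vars (\<lambda>_. borel) X {i, j}"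
      using that by (intro indep_vars_subset[OF indep]) auto
    then have "integrable M (\<lambda>\<omega>. \<Prod>k\<in>{i, j}. X k \<omega>)"
      using that by (intro indep_vars_integrable) (auto intro: int)
    then show ?thesis using False by simp
  qed
  have uncorrelated: "expectation (\<lambda>\<omega>. X i \<omega> * X j \<omega>) = 0" if "i \<in> I" "j \<in> I" "i \<noteq> j" for i j
  proof -
    have "indep_vars (\<lambda>_. borel) X {i, j}"
      using that by (intro indep_vars_subset[OF indep]) auto
    then have "expectation (\<lambda>\<omega>. \<Prod>k\<in>{i, j}. X k \<omega>) = (\<Prod>k\<in>{i, j}. expectation (X k))"
      using that by (intro indep_vars_lebesgue_integral) (auto intro: int)
    then show ?thesis using that centred by simp
  qed
  define S where "S = (\<lambda>\<omega>. \<Sum>i\<in>I. w i * X i \<omega>)"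
  have "integrable M S"
    unfolding S_def by (auto intro!: integrable_sum integrable_mult_right int)
  moreover have "expectation S = 0"
    unfolding S_def using int centred by (subst Bochner_Integration.integral_sum) auto
  ultimately have "variance (\<lambda>\<omega>. b + S \<omega>) = expectation (\<lambda>\<omega>. (S \<omega>)\<^sup>2)"
    by (simp add: prob_space)
  also have "\<dots> = expectation (\<lambda>\<omega>. \<Sum>i\<in>I. \<Sum>j\<in>I. w i * w j * (X i \<omega> * X j \<omega>))"
    unfolding S_def power2_eq_square sum_product by (simp add: ac_simps)
  also have "\<dots> = (\<Sum>i\<in>I. \<Sum>j\<in>I. w i * w j * expectation (\<lambda>\<omega>. X i \<omega> * X j \<omega>))"
    using prod_int by (simp add: Bochner_Integration.integral_sum integrable_sum)
  also have "\<dots> = (\<Sum>i\<in>I. w i * w i * expectation (\<lambda>\<omega>. X i \<omega> * X i \<omega>))"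
  proof (rule sum.cong[OF refl])
    fix i assume "i \<in> I"
    then have "(\<Sum>j\<in>I. w i * w j * expectation (\<lambda>\<omega>. X i \<omega> * X j \<omega>))
        = (\<Sum>j\<in>I. if i = j then w i * w j * expectation (\<lambda>\<omega>. X i \<omega> * X j \<omega>) else 0)"
      using uncorrelated by (intro sum.cong) auto
    then show "(\<Sum>j\<in>I. w i * w j * expectation (\<lambda>\<omega>. X i \<omega> * X j \<omega>))
        = w i * w i * expectation (\<lambda>\<omega>. X i \<omega> * X i \<omega>)"
      using fin \<open>i \<in> I\<close> by simp
  qed
  finally show ?thesis unfolding S_def by (simp add: power2_eq_square)
qed

lemma (in prob_space) centred_normal_moments:
  assumes "0 < \<sigma>" and D: "distributed M lborel X (normal_density 0 \<sigma>)"
  shows "integrable M (\<lambda>\<omega>. (X \<omega>)\<^sup>2)" and "expectation X = 0"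
    and "expectation (\<lambda>\<omega>. (X \<omega>)\<^sup>2) = \<sigma>\<^sup>2"
proof -
  have "integrable lborel (\<lambda>x. normal_density 0 \<sigma> x * x\<^sup>2)"
    using integrable_normal_moment[OF assms(1), of 0 2] by simp
  then show "integrable M (\<lambda>\<omega>. (X \<omega>)\<^sup>2)"
    using distributed_integrable[OF D, of "\<lambda>x. x\<^sup>2"] by simp
  show "expectation X = 0"
    by (rule normal_distributed_expectation[OF assms])
  then show "expectation (\<lambda>\<omega>. (X \<omega>)\<^sup>2) = \<sigma>\<^sup>2"
    using normal_distributed_variance[OF assms] by simp
qed

lemma (in prob_space) variance_affine_gaussian_initial_noise:
  fixes th0 :: "'a \<Rightarrow> real" and xi :: "nat \<Rightarrow> 'a \<Rightarrow> real"
  assumes "0 < \<alpha>"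
    and "distributed M lborel th0 (normal_density 0 (sqrt (1 / \<alpha>)))"
    and "\<And>j. distributed M lborel (xi j) (normal_density 0 1)"
    and "indep_vars (\<lambda>_. borel) (\<lambda>i. case i of None \<Rightarrow> th0 | Some j \<Rightarrow> xi j) UNIV"
  shows "variance (\<lambda>\<omega>. a * th0 \<omega> + b + (\<Sum>i<j. c i * xi i \<omega>))
       = a\<^sup>2 / \<alpha> + (\<Sum>i<j. (c i)\<^sup>2)"
proof -
  define X where "X = (\<lambda>i. case i of None \<Rightarrow> th0 | Some j \<Rightarrow> xi j)"
  define \<sigma> where "\<sigma> = (\<lambda>i :: nat option. case i of None \<Rightarrow> sqrt (1 / \<alpha>) | Some _ \<Rightarrow> 1)"
  define w where "w = (\<lambda>i. case i of None \<Rightarrow> a | Some j \<Rightarrow> c j)"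
  define I where "I = insert None (Some ` {..<j})"
  have moments: "integrable M (\<lambda>\<omega>. (X i \<omega>)\<^sup>2) \<and> expectation (X i) = 0
      \<and> expectation (\<lambda>\<omega>. (X i \<omega>)\<^sup>2) = (\<sigma> i)\<^sup>2" for i
  proof -
    have "0 < \<sigma> i" "distributed M lborel (X i) (normal_density 0 (\<sigma> i))"
      using assms by (cases i; simp add: X_def \<sigma>_def)+
    then show ?thesis using centred_normal_moments by blast
  qed
  have "variance (\<lambda>\<omega>. b + (\<Sum>i\<in>I. w i * X i \<omega>))
      = (\<Sum>i\<in>I. (w i)\<^sup>2 * (\<sigma> i)\<^sup>2)"
    using moments
    by (subst variance_affine_indep_centred, auto simp: I_def
        intro!: indep_vars_subset[OF assms(4)[folded X_def]])
  also have "\<dots> = a\<^sup>2 / \<alpha> + (\<Sum>i<j. (c i)\<^sup>2)"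
    using \<open>0 < \<alpha>\<close> by (simp add: I_def sum.reindex w_def \<sigma>_def)
  finally show ?thesis
    by (simp add: I_def sum.reindex w_def X_def ac_simps)
qed

lemma linear_recurrence_closed_form:
  fixes T :: "nat \<Rightarrow> 'a \<Rightarrow> real"
  assumes step: "\<And>j \<omega>. T (Suc j) \<omega> = m j * T j \<omega> + u j \<omega>"
  shows "T j \<omega> = (\<Prod>i<j. m i) * T 0 \<omega> + (\<Sum>i<j. (\<Prod>l=Suc i..<j. m l) * u i \<omega>)"
proof (induction j)
  case 0
  then show ?case by simp
next
  case (Suc j)
  have prod_Suc: "(\<Prod>l=Suc i..<Suc j. m l) = m j * (\<Prod>l=Suc i..<j. m l)" if "i < j" for i
    using that by (simp add: prod.atLeastLessThan_Suc)
  have "(\<Sum>i<j. (\<Prod>l=Suc i..<Suc j. m l) * u i \<omega>) = m j * (\<Sum>i<j. (\<Prod>l=Suc i..<j. m l) * u i \<omega>)"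
    unfolding sum_distrib_left by (rule sum.cong[OF refl]) (subst prod_Suc; simp)
  then show ?case
    using Suc by (simp add: step algebra_simps)
qed

lemma prod_lessThan_mult_mod:
  fixes g :: "nat \<Rightarrow> 'a::comm_monoid_mult"
  shows "(\<Prod>i<k * n. g (i mod n)) = (\<Prod>i<n. g i) ^ k"
proof -
  have "(\<Prod>i\<in>{m * n..<m * n + n}. g (i mod n)) = (\<Prod>i<n. g i)" for m
    using prod.shift_bounds_nat_ivl[of "\<lambda>i. g (i mod n)" 0 "m * n" n]
    by (simp add: atLeast0LessThan add.commute)
  then show ?thesis
    using prod.nat_group[of "\<lambda>i. g (i mod n)" n k] by simp
qed

lemma one_minus_power_ge_cubic:
  fixes x :: real
  assumes "0 \<le> x" "x \<le> 1"
  shows "1 - real m * x + real m * (real m - 1) / 2 * x\<^sup>2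
           - real m * (real m - 1) * (real m - 2) / 6 * x ^ 3 \<le> (1 - x) ^ m"
proof (induction m)
  case 0
  then show ?case by simp
next
  case (Suc m)
  define B where "B = 1 - real m * x + real m * (real m - 1) / 2 * x\<^sup>2
    - real m * (real m - 1) * (real m - 2) / 6 * x ^ 3"
  have "(1 - x) * B = 1 - real (Suc m) * x + real (Suc m) * (real (Suc m) - 1) / 2 * x\<^sup>2
      - real (Suc m) * (real (Suc m) - 1) * (real (Suc m) - 2) / 6 * x ^ 3
      + real m * (real m - 1) * (real m - 2) / 6 * x ^ 4"
    by (simp add: B_def field_simps power2_eq_square power3_eq_cube power4_eq_xxxx)
  moreover have "0 \<le> real m * (real m - 1) * (real m - 2)"
    by (cases "m \<le> 2") (auto simp: le_Suc_eq numeral_2_eq_2)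
  ultimately have "1 - real (Suc m) * x + real (Suc m) * (real (Suc m) - 1) / 2 * x\<^sup>2
      - real (Suc m) * (real (Suc m) - 1) * (real (Suc m) - 2) / 6 * x ^ 3 \<le> (1 - x) * B"
    using \<open>0 \<le> x\<close> by simp
  also have "\<dots> \<le> (1 - x) * (1 - x) ^ m"
    using Suc \<open>x \<le> 1\<close> by (intro mult_left_mono) (auto simp: B_def)
  finally show ?case by simp
qed

lemma cubic_truncation_lower_bound:
  fixes N \<alpha> A :: real
  assumes "2 \<le> N" "0 < \<alpha>" "\<alpha> + 3 * N \<le> A"
  shows "4 * N * \<alpha> * A \<le> A ^ 3 - 4 * N * A\<^sup>2 + 2 * N * (4 * N - 1) * A
           - 2 / 3 * N * (4 * N - 1) * (4 * N - 2)"
proof -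
  define s where "s = A - 3 * N"
  have "0 < s" using assms by (simp add: s_def)
  have "(N + 2)\<^sup>2 \<le> (2 * N)\<^sup>2"
    using assms by (intro power_mono) auto
  moreover have "s\<^sup>2 - (N + 2) * s + 13 * N\<^sup>2 / 3
      = (s - (N + 2) / 2)\<^sup>2 + ((2 * N)\<^sup>2 - (N + 2)\<^sup>2) / 4 + 10 * N\<^sup>2 / 3"
    by (simp add: power2_eq_square field_simps)
  ultimately have quadratic: "0 \<le> s\<^sup>2 - (N + 2) * s + 13 * N\<^sup>2 / 3"
    by (metis add_nonneg_nonneg diff_ge_0_iff_ge divide_nonneg_pos zero_le_power2 zero_less_numeral
        mult_nonneg_nonneg zero_le_numeral)
  have "2 * N \<le> N * N"
    using assms by (intro mult_right_mono) auto
  moreover have "0 \<le> N * (s\<^sup>2 - (N + 2) * s + 13 * N\<^sup>2 / 3)" "0 \<le> s ^ 3"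
    using quadratic assms \<open>0 < s\<close> by simp_all
  ultimately have "0 \<le> N * (s\<^sup>2 - (N + 2) * s + 13 * N\<^sup>2 / 3) + s ^ 3 + 2 * N\<^sup>2 - 4 * N / 3"
    using assms(1) unfolding power2_eq_square by linarith
  also have "\<dots> = A ^ 3 - 4 * N * A\<^sup>2 + 2 * N * (4 * N - 1) * A
      - 2 / 3 * N * (4 * N - 1) * (4 * N - 2) - 4 * N * s * A"
    by (simp add: s_def field_simps power2_eq_square power3_eq_cube)
  finally have "4 * N * s * A \<le> A ^ 3 - 4 * N * A\<^sup>2 + 2 * N * (4 * N - 1) * A
      - 2 / 3 * N * (4 * N - 1) * (4 * N - 2)"
    by simp
  moreover have "4 * N * \<alpha> * A \<le> 4 * N * s * A"
    using assms \<open>0 < s\<close> by (intro mult_right_mono mult_left_mono) (auto simp: s_def)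
  ultimately show ?thesis by linarith
qed

lemma contraction_power_lower_bound:
  fixes \<alpha> A :: real and n :: nat
  assumes "2 \<le> n" "0 < \<alpha>" "\<alpha> + 3 * real n \<le> A"
  shows "4 * real n * \<alpha> \<le> A\<^sup>2 * (1 - 1 / A) ^ (4 * n)"
proof -
  define N where "N = real n"
  have "2 \<le> N" "1 < A"
    using assms by (simp_all add: N_def)
  have "4 * N * \<alpha> \<le> (A ^ 3 - 4 * N * A\<^sup>2 + 2 * N * (4 * N - 1) * A
      - 2 / 3 * N * (4 * N - 1) * (4 * N - 2)) / A"
    using cubic_truncation_lower_bound[OF \<open>2 \<le> N\<close> \<open>0 < \<alpha>\<close>] assms \<open>1 < A\<close>
    by (simp add: N_def field_simps)
  also have "\<dots> = A\<^sup>2 * (1 - real (4 * n) * (1 / A) + real (4 * n) * (real (4 * n) - 1) / 2 * (1 / A)\<^sup>2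
      - real (4 * n) * (real (4 * n) - 1) * (real (4 * n) - 2) / 6 * (1 / A) ^ 3)"
    using \<open>1 < A\<close> by (simp add: N_def field_simps power2_eq_square power3_eq_cube)
  also have "\<dots> \<le> A\<^sup>2 * (1 - 1 / A) ^ (4 * n)"
    using \<open>1 < A\<close> by (intro mult_left_mono one_minus_power_ge_cubic) auto
  finally show ?thesis by (simp add: N_def)
qed

definition sgld_factor :: "real \<Rightarrow> real \<Rightarrow> real \<Rightarrow> nat \<Rightarrow> nat \<Rightarrow> nat \<Rightarrow> real" where
  "sgld_factor \<alpha> \<beta> xh n r j =
     (if j mod n = r - 1 then sgld_lambda_hat \<alpha> \<beta> xh n else sgld_lambda \<alpha> \<beta> xh n)"

lemma sgld_iter_Suc_affine:
  "sgld_iter \<alpha> \<beta> xh c n r th0 xi (Suc j) \<omega>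
     = sgld_factor \<alpha> \<beta> xh n r j * sgld_iter \<alpha> \<beta> xh c n r th0 xi j \<omega>
       + sgld_eta \<alpha> \<beta> xh n / 2 * (real n * \<beta> * sgld_y xh c n r j * sgld_x xh n r j)
       + sqrt (sgld_eta \<alpha> \<beta> xh n) * xi j \<omega>"
  by (cases "j mod n = r - 1")
     (simp_all add: sgld_factor_def sgld_x_def sgld_y_def sgld_lambda_hat_def sgld_lambda_def
       algebra_simps power2_eq_square)

lemma sgld_epoch_product:
  assumes "1 \<le> r" "r \<le> n"
  shows "(\<Prod>i<k * n. sgld_factor \<alpha> \<beta> xh n r i)
       = (sgld_lambda_hat \<alpha> \<beta> xh n * sgld_lambda \<alpha> \<beta> xh n ^ (n - 1)) ^ k"
proof -
  have "(\<Prod>i<k * n. sgld_factor \<alpha> \<beta> xh n r i)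
      = (\<Prod>i<k * n. (\<lambda>i. if i = r - 1 then sgld_lambda_hat \<alpha> \<beta> xh n else sgld_lambda \<alpha> \<beta> xh n) (i mod n))"
    by (simp add: sgld_factor_def)
  also have "\<dots> = (\<Prod>i<n. if i = r - 1 then sgld_lambda_hat \<alpha> \<beta> xh n else sgld_lambda \<alpha> \<beta> xh n) ^ k"
    by (rule prod_lessThan_mult_mod)
  also have "\<dots> = (sgld_lambda_hat \<alpha> \<beta> xh n * sgld_lambda \<alpha> \<beta> xh n ^ (n - 1)) ^ k"
    using assms by (subst prod_gen_delta) auto
  finally show ?thesis .
qed

lemma sgld_lambda_eq:
  assumes "\<alpha> + real n * xh\<^sup>2 * \<beta> \<noteq> 0"
  shows "sgld_lambda \<alpha> \<beta> xh n = 1 - 1 / (\<alpha> + real n * xh\<^sup>2 * \<beta>)"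
  using assms by (simp add: sgld_lambda_def sgld_eta_def power2_eq_square)

lemma sgld_lambda_hat_eq:
  "sgld_lambda_hat \<alpha> \<beta> xh n = 1 - (\<alpha> + real n * xh\<^sup>2 * \<beta> / 4) / (\<alpha> + real n * xh\<^sup>2 * \<beta>)\<^sup>2"
  by (simp add: sgld_lambda_hat_def sgld_eta_def)

lemma sgld_lambda_bounds:
  assumes "0 \<le> \<alpha>" "0 \<le> \<beta>" "1 \<le> \<alpha> + real n * xh\<^sup>2 * \<beta>"
  shows "0 \<le> sgld_lambda \<alpha> \<beta> xh n" "sgld_lambda \<alpha> \<beta> xh n \<le> sgld_lambda_hat \<alpha> \<beta> xh n"
    "sgld_lambda_hat \<alpha> \<beta> xh n \<le> 1"
proof -
  define A where "A = \<alpha> + real n * xh\<^sup>2 * \<beta>"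
  define B where "B = \<alpha> + real n * xh\<^sup>2 * \<beta> / 4"
  have "0 \<le> B" "B \<le> A" "1 \<le> A"
    using assms by (simp_all add: A_def B_def)
  then have "B / A\<^sup>2 \<le> 1 / A"
    by (simp add: field_simps power2_eq_square)
  moreover have "sgld_lambda \<alpha> \<beta> xh n = 1 - 1 / A" "sgld_lambda_hat \<alpha> \<beta> xh n = 1 - B / A\<^sup>2"
    using \<open>1 \<le> A\<close> by (simp_all add: A_def B_def sgld_lambda_eq sgld_lambda_hat_eq)
  ultimately show "0 \<le> sgld_lambda \<alpha> \<beta> xh n" "sgld_lambda \<alpha> \<beta> xh n \<le> sgld_lambda_hat \<alpha> \<beta> xh n"
      "sgld_lambda_hat \<alpha> \<beta> xh n \<le> 1"
    using \<open>0 \<le> B\<close> \<open>1 \<le> A\<close> by auto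
qed

lemma sgld_scale_bounds:
  assumes "0 < \<alpha>" "2 \<le> n" "3 \<le> xh\<^sup>2 * \<beta>"
  shows "0 < \<beta>" "\<alpha> + 3 * real n \<le> \<alpha> + real n * xh\<^sup>2 * \<beta>" "1 \<le> \<alpha> + real n * xh\<^sup>2 * \<beta>"
proof -
  have "0 < xh\<^sup>2 * \<beta>"
    using assms by linarith
  then show "0 < \<beta>"
    by (simp add: zero_less_mult_iff)
  have "real n * 3 \<le> real n * (xh\<^sup>2 * \<beta>)"
    using assms by (intro mult_left_mono) auto
  then show "\<alpha> + 3 * real n \<le> \<alpha> + real n * xh\<^sup>2 * \<beta>"
    by (simp add: mult.assoc)
  moreover have "2 \<le> real n"
    using assms by simp
  ultimately show "1 \<le> \<alpha> + real n * xh\<^sup>2 * \<beta>"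
    using assms by linarith
qed

lemma sgld_noise_le_contraction:
  assumes "0 < \<alpha>" "2 \<le> n" "3 \<le> xh\<^sup>2 * \<beta>"
  shows "2 * real n * sgld_eta \<alpha> \<beta> xh n
       \<le> (sgld_lambda_hat \<alpha> \<beta> xh n * sgld_lambda \<alpha> \<beta> xh n ^ (n - 1)) ^ 4 / \<alpha>"
proof -
  define A where "A = \<alpha> + real n * xh\<^sup>2 * \<beta>"
  define lam where "lam = sgld_lambda \<alpha> \<beta> xh n"
  define lamh where "lamh = sgld_lambda_hat \<alpha> \<beta> xh n"
  have "0 < \<beta>" and A_ge: "\<alpha> + 3 * real n \<le> A" and "1 \<le> A"
    using sgld_scale_bounds[OF assms] by (simp_all add: A_def)
  then have "0 \<le> lam" "lam \<le> lamh" and lam_eq: "lam = 1 - 1 / A"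
    using sgld_lambda_bounds[of \<alpha> \<beta> n xh] sgld_lambda_eq[of \<alpha> n xh \<beta>] assms \<open>0 < \<beta>\<close>
    by (simp_all add: A_def lam_def lamh_def)
  have "4 * real n * \<alpha> \<le> A\<^sup>2 * lam ^ (4 * n)"
    using contraction_power_lower_bound[OF assms(2,1) A_ge] by (simp add: lam_eq)
  also have "lam ^ (4 * n) = (lam * lam ^ (n - 1)) ^ 4"
    using assms(2) by (simp flip: power_Suc power_mult add: mult.commute)
  also have "\<dots> \<le> (lamh * lam ^ (n - 1)) ^ 4"
    using \<open>0 \<le> lam\<close> \<open>lam \<le> lamh\<close> by (intro power_mono mult_right_mono) auto
  finally have "4 * real n * \<alpha> \<le> A\<^sup>2 * (lamh * lam ^ (n - 1)) ^ 4"
    by (simp add: mult_left_mono)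
  then show ?thesis
    using assms \<open>1 \<le> A\<close> by (simp add: sgld_eta_def A_def lam_def lamh_def field_simps)
qed

lemma (in prob_space) sgld_iter_variance_le:
  assumes "0 < \<alpha>" "0 \<le> \<beta>" "1 \<le> \<alpha> + real n * xh\<^sup>2 * \<beta>"
    and "distributed M lborel th0 (normal_density 0 (sqrt (1 / \<alpha>)))"
    and "\<And>j. distributed M lborel (xi j) (normal_density 0 1)"
    and "indep_vars (\<lambda>_. borel) (\<lambda>i. case i of None \<Rightarrow> th0 | Some j \<Rightarrow> xi j) UNIV"
  shows "variance (sgld_iter \<alpha> \<beta> xh c n r th0 xi j)
       \<le> (\<Prod>i<j. sgld_factor \<alpha> \<beta> xh n r i)\<^sup>2 / \<alpha> + real j * sgld_eta \<alpha> \<beta> xh n"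
proof -
  define f where "f = sgld_factor \<alpha> \<beta> xh n r"
  define \<eta> where "\<eta> = sgld_eta \<alpha> \<beta> xh n"
  define d where "d = (\<lambda>j. \<eta> / 2 * (real n * \<beta> * sgld_y xh c n r j * sgld_x xh n r j))"
  define P where "P = (\<lambda>i. \<Prod>l=Suc i..<j. f l)"
  have "sgld_iter \<alpha> \<beta> xh c n r th0 xi (Suc j) \<omega>
      = f j * sgld_iter \<alpha> \<beta> xh c n r th0 xi j \<omega> + (d j + sqrt \<eta> * xi j \<omega>)" for j \<omega>
    by (subst sgld_iter_Suc_affine) (simp add: f_def d_def \<eta>_def)
  then have "sgld_iter \<alpha> \<beta> xh c n r th0 xi j \<omega>
      = (\<Prod>i<j. f i) * sgld_iter \<alpha> \<beta> xh c n r th0 xi 0 \<omega> + (\<Sum>i<j. P i * (d i + sqrt \<eta> * xi i \<omega>))"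
    for \<omega> unfolding P_def by (rule linear_recurrence_closed_form)
  then have closed: "sgld_iter \<alpha> \<beta> xh c n r th0 xi j = (\<lambda>\<omega>. (\<Prod>i<j. f i) * th0 \<omega>
      + (\<Sum>i<j. P i * d i) + (\<Sum>i<j. (sqrt \<eta> * P i) * xi i \<omega>))"
    by (simp add: fun_eq_iff distrib_left sum.distrib ac_simps)
  have "0 \<le> f i" "f i \<le> 1" for i
    using sgld_lambda_bounds[OF less_imp_le[OF assms(1)] assms(2,3)] by (auto simp: f_def sgld_factor_def)
  then have "0 \<le> P i" "P i \<le> 1" for i
    by (simp_all add: P_def prod_nonneg prod_le_1)
  then have "(P i)\<^sup>2 \<le> 1" for i
    by (simp add: power_le_one)
  moreover have "0 \<le> \<eta>"
    by (simp add: \<eta>_def sgld_eta_def)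
  ultimately have "(\<Sum>i<j. (sqrt \<eta> * P i)\<^sup>2) \<le> (\<Sum>i<j. \<eta>)"
    by (intro sum_mono) (simp add: power_mult_distrib mult_left_le)
  then show ?thesis
    unfolding closed using variance_affine_gaussian_initial_noise[OF assms(1,4,5,6)]
    by (simp add: f_def \<eta>_def)
qed

lemma (in prob_space) sgld_two_epoch_variance_le:
  assumes "0 < \<alpha>" "2 \<le> n" "3 \<le> xh\<^sup>2 * \<beta>" "r \<in> {1..n}"
    and "distributed M lborel th0 (normal_density 0 (sqrt (1 / \<alpha>)))"
    and "\<And>j. distributed M lborel (xi j) (normal_density 0 1)"
    and "indep_vars (\<lambda>_. borel) (\<lambda>i. case i of None \<Rightarrow> th0 | Some j \<Rightarrow> xi j) UNIV"
  shows "variance (sgld_iter \<alpha> \<beta> xh c n r th0 xi (2 * n))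
       \<le> 2 * (sgld_lambda_hat \<alpha> \<beta> xh n * sgld_lambda \<alpha> \<beta> xh n ^ (n - 1)) ^ 4 / \<alpha>"
proof -
  define P where "P = sgld_lambda_hat \<alpha> \<beta> xh n * sgld_lambda \<alpha> \<beta> xh n ^ (n - 1)"
  have "0 \<le> \<beta>" "1 \<le> \<alpha> + real n * xh\<^sup>2 * \<beta>"
    using sgld_scale_bounds[OF assms(1-3)] by simp_all
  have "variance (sgld_iter \<alpha> \<beta> xh c n r th0 xi (2 * n))
      \<le> (\<Prod>i<2 * n. sgld_factor \<alpha> \<beta> xh n r i)\<^sup>2 / \<alpha> + real (2 * n) * sgld_eta \<alpha> \<beta> xh n"
    using assms by (intro sgld_iter_variance_le \<open>0 \<le> \<beta>\<close> \<open>1 \<le> \<alpha> + real n * xh\<^sup>2 * \<beta>\<close>)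
  also have "(\<Prod>i<2 * n. sgld_factor \<alpha> \<beta> xh n r i)\<^sup>2 = P ^ 4"
    using assms(4) by (simp add: sgld_epoch_product P_def flip: power_mult)
  also have "real (2 * n) * sgld_eta \<alpha> \<beta> xh n \<le> P ^ 4 / \<alpha>"
    using sgld_noise_le_contraction[OF assms(1-3)] by (simp add: P_def)
  finally show ?thesis by (simp add: P_def)
qed

lemma sgld_epoch_factor_le:
  assumes "0 < \<alpha>" "2 \<le> n" "3 \<le> xh\<^sup>2 * \<beta>" "1 \<le> r"
  shows "(sgld_lambda_hat \<alpha> \<beta> xh n * sgld_lambda \<alpha> \<beta> xh n ^ (n - 1))\<^sup>2
       \<le> (sgld_lambda_hat \<alpha> \<beta> xh n * sgld_lambda \<alpha> \<beta> xh n ^ (n - r))\<^sup>2"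
proof -
  have "0 \<le> sgld_lambda \<alpha> \<beta> xh n" "sgld_lambda \<alpha> \<beta> xh n \<le> sgld_lambda_hat \<alpha> \<beta> xh n"
      "sgld_lambda_hat \<alpha> \<beta> xh n \<le> 1"
    using sgld_lambda_bounds sgld_scale_bounds[OF assms(1-3)] assms(1) by (simp_all add: less_imp_le)
  then show ?thesis
    using assms(4) by (auto intro!: power_mono mult_left_mono power_decreasing)
qed

theorem lemmaA3:
  fixes \<alpha> \<beta> xh c :: real and n :: nat
    and M :: "'a measure" and th0 :: "'a \<Rightarrow> real" and xi :: "nat \<Rightarrow> 'a \<Rightarrow> real"
  assumes "\<alpha> > 0" "\<beta> > 0" "xh > 0" "c > 0" "n \<ge> 2"
    and "xh\<^sup>2 * \<beta> > 3"
    and "real n > 1 / (2 * \<alpha> * xh\<^sup>2 * \<beta>) - 1 / (xh\<^sup>2 * \<beta>)"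
    and "prob_space M"
    and "distributed M lborel th0 (normal_density 0 (sqrt (1 / \<alpha>)))"
    and "\<And>j. distributed M lborel (xi j) (normal_density 0 1)"
    and "prob_space.indep_vars M (\<lambda>_. borel)
           (\<lambda>i. case i of None \<Rightarrow> th0 | Some j \<Rightarrow> xi j) UNIV"
  shows "\<exists>kd::nat. kd > 0 \<and> (\<forall>k::nat. 0 < k \<and> k \<le> kd \<longrightarrow>
     (let lam = sgld_lambda \<alpha> \<beta> xh n; lamh = sgld_lambda_hat \<alpha> \<beta> xh n;
          var = (\<lambda>X. integral\<^sup>L M (\<lambda>\<omega>. (X \<omega> - integral\<^sup>L M X)\<^sup>2))
      in var (sgld_iter \<alpha> \<beta> xh c n 1 th0 xi ((k + 1) * n))
           \<le> 2 * (lamh * lam ^ (n - 1))\<^sup>2 * (1 / \<alpha>) * (lamh * lam ^ (n - 1)) ^ (2 * k)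
       \<and> (\<forall>r \<in> {2..n}. var (sgld_iter \<alpha> \<beta> xh c n r th0 xi ((k + 1) * n))
           \<le> 6 * (lamh * lam ^ (n - r))\<^sup>2 * (1 / \<alpha>) * (lamh * lam ^ (n - 1)) ^ (2 * k))))"
proof -
  interpret prob_space M by (fact assms(8))
  define lam where "lam = sgld_lambda \<alpha> \<beta> xh n"
  define lamh where "lamh = sgld_lambda_hat \<alpha> \<beta> xh n"
  define P where "P = lamh * lam ^ (n - 1)"
  note regime = assms(1,5) less_imp_le[OF assms(6)]
  have var_le: "variance (sgld_iter \<alpha> \<beta> xh c n r th0 xi (n + n)) \<le> 2 * P\<^sup>2 * (1 / \<alpha>) * P\<^sup>2"
    if "r \<in> {1..n}" for r
  proof -
    have "variance (sgld_iter \<alpha> \<beta> xh c n r th0 xi (2 * n)) \<le> 2 * P ^ 4 / \<alpha>"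
      unfolding P_def lam_def lamh_def
      by (rule sgld_two_epoch_variance_le[OF regime that assms(9-11)])
    also have "\<dots> = 2 * P\<^sup>2 * (1 / \<alpha>) * P\<^sup>2"
      by (simp add: power2_eq_square power4_eq_xxxx)
    finally show ?thesis
      by (simp only: mult_2)
  qed
  have "variance (sgld_iter \<alpha> \<beta> xh c n r th0 xi (n + n))
      \<le> 6 * (lamh * lam ^ (n - r))\<^sup>2 * (1 / \<alpha>) * P\<^sup>2" if "r \<in> {2..n}" for r
  proof -
    have "P\<^sup>2 \<le> (lamh * lam ^ (n - r))\<^sup>2"
      using sgld_epoch_factor_le[OF regime, of r] that by (simp add: P_def lam_def lamh_def)
    then have "2 * P\<^sup>2 \<le> 6 * (lamh * lam ^ (n - r))\<^sup>2"
      using zero_le_power2[of "lamh * lam ^ (n - r)"] by linarith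
    then have "2 * P\<^sup>2 * (1 / \<alpha>) * P\<^sup>2 \<le> 6 * (lamh * lam ^ (n - r))\<^sup>2 * (1 / \<alpha>) * P\<^sup>2"
      using assms(1) by (intro mult_right_mono) auto
    with var_le[of r] that show ?thesis
      by simp
  qed
  with var_le[of 1] assms(5) show ?thesis
    unfolding Let_def lam_def[symmetric] lamh_def[symmetric] P_def[symmetric]
    by (intro exI[of _ 1]) (auto simp: le_Suc_eq)
qed

end
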